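(* Let $Q=A_2\otimes E_8$ and $R=\sqrt3E_8$. There exist isometric embeddings of $Q\perp R$ into $E_8^3=E_8\perp E_8\perp E_8$; in fact there are at least two kinds: (i) embeddings such that the image of $R$ is the fixed-point sublattice of an automorphism of order $3$ of $E_8^3$ which permutes the three direct summands cyclically; and (ii) embeddings such that $(\mathbb Q R)\cap E_8^3$ (the intersection of $E_8^3$ with the rational span of the image of $R$) is an orthogonal direct summand of $E_8^3$.
   Context: $A_2\otimes E_8$ is the tensor product of root lattices with product form; $\sqrt3E_8$ is the $E_8$ lattice with form scaled by 3. *)

theory Defs
  imports Complex_Main "HOL-Library.Function_Algebras"
begin

text \<open>Lattices are given in coordinates: a lattice of rank n is Z^n (vectors
  nat => int supported on {0..<n}) together with an integral Gram matrix.\<close>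

definition zvecs :: "nat \<Rightarrow> (nat \<Rightarrow> int) set" where
  "zvecs n = {v. \<forall>i\<ge>n. v i = 0}"

definition bform :: "(nat \<Rightarrow> nat \<Rightarrow> int) \<Rightarrow> nat \<Rightarrow> (nat \<Rightarrow> int) \<Rightarrow> (nat \<Rightarrow> int) \<Rightarrow> int" where
  "bform G n v w = (\<Sum>i<n. \<Sum>j<n. v i * G i j * w j)"

text \<open>Cartan (Gram) matrix of E8 w.r.t. simple roots, Bourbaki labelling
  (0-indexed: chain 0-2-3-4-5-6-7, node 1 attached to node 3).\<close>
definition e8_edge :: "nat \<Rightarrow> nat \<Rightarrow> bool" where
  "e8_edge i j = ({i, j} \<in> {{0,2},{1,3},{2,3},{3,4},{4,5},{5,6},{6,7}})"

definition gram_E8 :: "nat \<Rightarrow> nat \<Rightarrow> int" where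
  "gram_E8 i j = (if i = j then 2 else if e8_edge i j then -1 else 0)"

definition gram_A2 :: "nat \<Rightarrow> nat \<Rightarrow> int" where
  "gram_A2 i j = (if i = j then 2 else -1)"

text \<open>A2 \<otimes> E8 on Z^16, basis e_a \<otimes> f_k at index 8a+k (Kronecker product).\<close>
definition gram_Q :: "nat \<Rightarrow> nat \<Rightarrow> int" where
  "gram_Q i j = gram_A2 (i div 8) (j div 8) * gram_E8 (i mod 8) (j mod 8)"

definition gram_R :: "nat \<Rightarrow> nat \<Rightarrow> int" where
  "gram_R i j = 3 * gram_E8 i j"

definition gram_QR :: "nat \<Rightarrow> nat \<Rightarrow> int" where
  "gram_QR i j = (if i < 16 \<and> j < 16 then gram_Q i j
                  else if 16 \<le> i \<and> 16 \<le> j then gram_R (i - 16) (j - 16) else 0)"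

definition gram_E8_3 :: "nat \<Rightarrow> nat \<Rightarrow> int" where
  "gram_E8_3 i j = (if i div 8 = j div 8 then gram_E8 (i mod 8) (j mod 8) else 0)"

definition E8_3 :: "(nat \<Rightarrow> int) set" where
  "E8_3 = zvecs 24"

definition E8_3_summand :: "nat \<Rightarrow> (nat \<Rightarrow> int) set" where
  "E8_3_summand b = {v \<in> zvecs 24. \<forall>i. i div 8 \<noteq> b \<longrightarrow> v i = 0}"

definition QR_lattice :: "(nat \<Rightarrow> int) set" where
  "QR_lattice = zvecs 24"

definition R_part :: "(nat \<Rightarrow> int) set" where
  "R_part = {v \<in> zvecs 24. \<forall>i<16. v i = 0}"

definition isometric_embedding :: "((nat \<Rightarrow> int) \<Rightarrow> (nat \<Rightarrow> int)) \<Rightarrow> bool" where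
  "isometric_embedding f \<longleftrightarrow>
     f ` QR_lattice \<subseteq> E8_3 \<and>
     (\<forall>v\<in>QR_lattice. \<forall>w\<in>QR_lattice. f (v + w) = f v + f w) \<and>
     (\<forall>v\<in>QR_lattice. \<forall>w\<in>QR_lattice. bform gram_E8_3 24 (f v) (f w) = bform gram_QR 24 v w) \<and>
     inj_on f QR_lattice"

definition E8_3_automorphism :: "((nat \<Rightarrow> int) \<Rightarrow> (nat \<Rightarrow> int)) \<Rightarrow> bool" where
  "E8_3_automorphism s \<longleftrightarrow>
     bij_betw s E8_3 E8_3 \<and>
     (\<forall>v\<in>E8_3. \<forall>w\<in>E8_3. s (v + w) = s v + s w) \<and>
     (\<forall>v\<in>E8_3. \<forall>w\<in>E8_3. bform gram_E8_3 24 (s v) (s w) = bform gram_E8_3 24 v w)"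

definition has_order_3 :: "((nat \<Rightarrow> int) \<Rightarrow> (nat \<Rightarrow> int)) \<Rightarrow> bool" where
  "has_order_3 s \<longleftrightarrow> (\<forall>v\<in>E8_3. s (s (s v)) = v) \<and> (\<exists>v\<in>E8_3. s v \<noteq> v)"

definition permutes_summands_cyclically :: "((nat \<Rightarrow> int) \<Rightarrow> (nat \<Rightarrow> int)) \<Rightarrow> bool" where
  "permutes_summands_cyclically s \<longleftrightarrow>
     (\<exists>c\<in>{1,2::nat}. \<forall>b<3. s ` E8_3_summand b = E8_3_summand ((b + c) mod 3))"

definition fixed_sublattice :: "((nat \<Rightarrow> int) \<Rightarrow> (nat \<Rightarrow> int)) \<Rightarrow> (nat \<Rightarrow> int) set" where
  "fixed_sublattice s = {v \<in> E8_3. s v = v}"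

definition rat_span :: "(nat \<Rightarrow> int) set \<Rightarrow> (nat \<Rightarrow> rat) set" where
  "rat_span L = {x. \<exists>S c. finite S \<and> S \<subseteq> L \<and>
                       x = (\<lambda>i. \<Sum>v\<in>S. c v * of_int (v i))}"

definition rat_span_inter_E8_3 :: "(nat \<Rightarrow> int) set \<Rightarrow> (nat \<Rightarrow> int) set" where
  "rat_span_inter_E8_3 M = {x \<in> E8_3. (\<lambda>i. (of_int (x i) :: rat)) \<in> rat_span M}"

definition is_subgroup_of_E8_3 :: "(nat \<Rightarrow> int) set \<Rightarrow> bool" where
  "is_subgroup_of_E8_3 N \<longleftrightarrow> N \<subseteq> E8_3 \<and> 0 \<in> N \<and>
     (\<forall>a\<in>N. \<forall>b\<in>N. a + b \<in> N) \<and> (\<forall>a\<in>N. - a \<in> N)"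

definition orthogonal_direct_summand :: "(nat \<Rightarrow> int) set \<Rightarrow> bool" where
  "orthogonal_direct_summand N \<longleftrightarrow>
     is_subgroup_of_E8_3 N \<and>
     (\<exists>N'. is_subgroup_of_E8_3 N' \<and>
        (\<forall>a\<in>N. \<forall>b\<in>N'. bform gram_E8_3 24 a b = 0) \<and>
        (\<forall>x\<in>E8_3. \<exists>!p. fst p \<in> N \<and> snd p \<in> N' \<and> x = fst p + snd p))"

end

theory Submission
  imports Defs
begin

text \<open>Write vectors of \<open>Q \<perp> R\<close> and of \<open>E\<^sub>8\<^sup>3\<close> as triples of \<open>E\<^sub>8\<close>-vectors; the form of
  \<open>Q \<perp> R\<close> is then \<open>2(q\<^sub>0,q\<^sub>0') - (q\<^sub>0,q\<^sub>1') - (q\<^sub>1,q\<^sub>0') + 2(q\<^sub>1,q\<^sub>1') + 3(r,r')\<close>.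

  (i) The map \<open>(q\<^sub>0, q\<^sub>1, r) \<mapsto> (q\<^sub>0 + r, q\<^sub>1 - q\<^sub>0 + r, r - q\<^sub>1)\<close> preserves this form and
  sends \<open>R\<close> onto the diagonal \<open>{(x, x, x)}\<close>, which is the fixed lattice of the cyclic
  permutation of the three summands.

  (ii) \<open>E\<^sub>8\<close> has an isometry \<open>\<omega>\<close> with \<open>\<omega>\<^sup>2 + \<omega> + 1 = 0\<close>; then \<open>\<theta> = 1 + 2\<omega>\<close> satisfies
  \<open>\<theta>\<^sup>2 = -3\<close> and multiplies the form by 3. The map
  \<open>(q\<^sub>0, q\<^sub>1, r) \<mapsto> (\<theta> r, q\<^sub>0 + \<omega> q\<^sub>1, q\<^sub>0 - q\<^sub>1 - \<omega> q\<^sub>1)\<close> is an isometric embedding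
  sending \<open>R\<close> to \<open>\<theta> E\<^sub>8\<close> inside the first summand; since \<open>\<theta>\<^sup>2 = -3\<close>, this has finite
  index there, so its rational closure is the first summand.\<close>

section \<open>The form of \<open>E\<^sub>8\<close> and its Eisenstein structure\<close>

definition e8_form :: "(nat \<Rightarrow> int) \<Rightarrow> (nat \<Rightarrow> int) \<Rightarrow> int" where
  "e8_form x y = (\<Sum>k<8. \<Sum>l<8. x k * gram_E8 k l * y l)"

lemma e8_form_add_left: "e8_form (x + y) z = e8_form x z + e8_form y z"
  unfolding e8_form_def by (simp add: algebra_simps sum.distrib)

lemma e8_form_add_right: "e8_form x (y + z) = e8_form x y + e8_form x z"
  unfolding e8_form_def by (simp add: algebra_simps sum.distrib)

lemma e8_form_minus_left: "e8_form (- x) y = - e8_form x y"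
  unfolding e8_form_def by (simp add: sum_negf)

lemma e8_form_minus_right: "e8_form x (- y) = - e8_form x y"
  unfolding e8_form_def by (simp add: sum_negf)

lemma e8_form_diff_left: "e8_form (x - y) z = e8_form x z - e8_form y z"
  using e8_form_add_left[of x "- y" z] by (simp add: e8_form_minus_left)

lemma e8_form_diff_right: "e8_form x (y - z) = e8_form x y - e8_form x z"
  using e8_form_add_right[of x y "- z"] by (simp add: e8_form_minus_right)

lemma e8_form_zero_left [simp]: "e8_form 0 y = 0"
  and e8_form_zero_right [simp]: "e8_form x 0 = 0"
  by (simp_all add: e8_form_def)

lemmas e8_form_bilinear =
  e8_form_add_left e8_form_add_right e8_form_diff_left e8_form_diff_right
  e8_form_minus_left e8_form_minus_right

lemma e8_form_expand:
  "e8_form x y =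
     2 * x 0 * y 0 - x 0 * y 2 + 2 * x 1 * y 1 - x 1 * y 3 - x 2 * y 0 + 2 * x 2 * y 2
     - x 2 * y 3 - x 3 * y 1 - x 3 * y 2 + 2 * x 3 * y 3 - x 3 * y 4 - x 4 * y 3
     + 2 * x 4 * y 4 - x 4 * y 5 - x 5 * y 4 + 2 * x 5 * y 5 - x 5 * y 6 - x 6 * y 5
     + 2 * x 6 * y 6 - x 6 * y 7 - x 7 * y 6 + 2 * x 7 * y 7"
  unfolding e8_form_def gram_E8_def e8_edge_def
  by (simp add: lessThan_nat_numeral doubleton_eq_iff algebra_simps)

lemma zvecs_add [simp, intro]: "x \<in> zvecs n \<Longrightarrow> y \<in> zvecs n \<Longrightarrow> x + y \<in> zvecs n"
  and zvecs_diff [simp, intro]: "x \<in> zvecs n \<Longrightarrow> y \<in> zvecs n \<Longrightarrow> x - y \<in> zvecs n"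
  and zvecs_uminus [simp, intro]: "x \<in> zvecs n \<Longrightarrow> - x \<in> zvecs n"
  and zvecs_mult [simp, intro]: "y \<in> zvecs n \<Longrightarrow> x * y \<in> zvecs n"
  and zvecs_zero [simp]: "0 \<in> zvecs n"
  by (simp_all add: zvecs_def)

text \<open>In simple-root coordinates: an isometry of \<open>E\<^sub>8\<close> of order 3 without nonzero fixed
  vectors, i.e. a root of \<open>\<omega>\<^sup>2 + \<omega> + 1\<close>, making \<open>E\<^sub>8\<close> a lattice over the Eisenstein integers.\<close>

definition e8_omega :: "(nat \<Rightarrow> int) \<Rightarrow> nat \<Rightarrow> int" where
  "e8_omega x = (\<lambda>k.
     if k = 0 then x 3 - x 4 - x 6
     else if k = 1 then x 0 + x 3 - x 4 - x 5 - x 7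
     else if k = 2 then x 0 + x 1 + x 3 - 2 * x 4 - x 6 - x 7
     else if k = 3 then x 0 + x 1 + x 2 + x 3 - 2 * x 4 - x 5 - x 6 - 2 * x 7
     else if k = 4 then x 0 + x 1 + x 2 + x 3 - 2 * x 4 - x 5 - x 6 - x 7
     else if k = 5 then x 0 + x 1 + x 3 - x 4 - x 5 - x 6 - x 7
     else if k = 6 then x 0 + x 3 - x 4 - x 6 - x 7
     else if k = 7 then x 3 - x 4 - x 7
     else 0)"

lemma e8_omega_in_zvecs [simp, intro]: "e8_omega x \<in> zvecs 8"
  by (simp add: e8_omega_def zvecs_def)

lemma e8_omega_add [simp]: "e8_omega (x + y) = e8_omega x + e8_omega y"
  by (simp add: e8_omega_def fun_eq_iff)

lemma e8_omega_zero [simp]: "e8_omega 0 = 0"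
  by (simp add: e8_omega_def fun_eq_iff)

lemma e8_omega_double: "e8_omega (2 * x) = 2 * e8_omega x"
  by (simp only: mult_2 e8_omega_add)

lemma e8_omega_square:
  assumes "x \<in> zvecs 8"
  shows "e8_omega (e8_omega x) = - x - e8_omega x"
proof
  fix k
  have "(k::nat) < 8 \<Longrightarrow> k = 0 \<or> k = 1 \<or> k = 2 \<or> k = 3 \<or> k = 4 \<or> k = 5 \<or> k = 6 \<or> k = 7"
    by auto
  then show "e8_omega (e8_omega x) k = (- x - e8_omega x) k"
    using assms by (cases "k < 8") (auto simp: e8_omega_def zvecs_def)
qed

lemma e8_form_omega_omega [simp]: "e8_form (e8_omega x) (e8_omega y) = e8_form x y"
  unfolding e8_form_expand by (simp add: e8_omega_def algebra_simps)

lemma e8_form_omega_sum: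
  assumes "x \<in> zvecs 8"
  shows "e8_form (e8_omega x) y + e8_form x (e8_omega y) = - e8_form x y"
proof -
  have "e8_form (e8_omega x) y = e8_form (e8_omega (e8_omega x)) (e8_omega y)"
    by simp
  also have "\<dots> = - e8_form x (e8_omega y) - e8_form x y"
    by (simp add: e8_omega_square[OF assms] e8_form_bilinear)
  finally show ?thesis
    by simp
qed

lemma e8_form_double_left: "e8_form (2 * x) y = 2 * e8_form x y"
  by (simp only: mult_2 e8_form_add_left)

lemma e8_form_double_right: "e8_form x (2 * y) = 2 * e8_form x y"
  by (simp only: mult_2 e8_form_add_right)

definition e8_sqrt_neg3 :: "(nat \<Rightarrow> int) \<Rightarrow> nat \<Rightarrow> int" where
  "e8_sqrt_neg3 x = x + 2 * e8_omega x"

lemma e8_sqrt_neg3_in_zvecs [simp, intro]: "x \<in> zvecs 8 \<Longrightarrow> e8_sqrt_neg3 x \<in> zvecs 8"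
  unfolding e8_sqrt_neg3_def by blast

lemma e8_sqrt_neg3_add [simp]: "e8_sqrt_neg3 (x + y) = e8_sqrt_neg3 x + e8_sqrt_neg3 y"
  by (simp add: e8_sqrt_neg3_def algebra_simps)

lemma e8_sqrt_neg3_zero [simp]: "e8_sqrt_neg3 0 = 0"
  by (simp add: e8_sqrt_neg3_def)

lemma e8_sqrt_neg3_square:
  assumes "x \<in> zvecs 8"
  shows "e8_sqrt_neg3 (e8_sqrt_neg3 x) = - 3 * x"
proof -
  have "e8_sqrt_neg3 (e8_sqrt_neg3 x) =
        x + 2 * e8_omega x + 2 * (e8_omega x + 2 * (- x - e8_omega x))"
    by (simp add: e8_sqrt_neg3_def e8_omega_double e8_omega_square[OF assms])
  then show ?thesis
    by (simp add: algebra_simps)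
qed

lemma e8_sqrt_neg3_eq_0_iff:
  assumes "x \<in> zvecs 8"
  shows "e8_sqrt_neg3 x = 0 \<longleftrightarrow> x = 0"
proof
  assume "e8_sqrt_neg3 x = 0"
  then have "- 3 * x = 0"
    using e8_sqrt_neg3_square[OF assms] by simp
  then show "x = 0"
    by (simp add: fun_eq_iff)
qed simp

lemma e8_form_sqrt_neg3:
  assumes "x \<in> zvecs 8"
  shows "e8_form (e8_sqrt_neg3 x) (e8_sqrt_neg3 y) = 3 * e8_form x y"
  using e8_form_omega_sum[OF assms, of y]
  by (simp add: e8_sqrt_neg3_def e8_form_bilinear e8_form_double_left e8_form_double_right)

section \<open>Block coordinates on \<open>\<int>\<^sup>2\<^sup>4\<close>\<close>

definition block :: "nat \<Rightarrow> (nat \<Rightarrow> int) \<Rightarrow> nat \<Rightarrow> int" where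
  "block a v = (\<lambda>k. if k < 8 then v (8 * a + k) else 0)"

definition blocks :: "(nat \<Rightarrow> int) \<Rightarrow> (nat \<Rightarrow> int) \<Rightarrow> (nat \<Rightarrow> int) \<Rightarrow> nat \<Rightarrow> int" where
  "blocks x y z = (\<lambda>i. if i < 8 then x i else if i < 16 then y (i - 8)
                      else if i < 24 then z (i - 16) else 0)"

lemma block_in_zvecs [simp, intro]: "block a v \<in> zvecs 8"
  by (simp add: block_def zvecs_def)

lemma blocks_in_zvecs [simp, intro]: "blocks x y z \<in> zvecs 24"
  by (simp add: blocks_def zvecs_def)

lemma block_add [simp]: "block a (v + w) = block a v + block a w"
  by (simp add: block_def fun_eq_iff)

lemma blocks_add: "blocks (x + x') (y + y') (z + z') = blocks x y z + blocks x' y' z'"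
  by (simp add: blocks_def fun_eq_iff)

lemma blocks_uminus: "- blocks x y z = blocks (- x) (- y) (- z)"
  by (simp add: blocks_def fun_eq_iff)

lemma blocks_zero [simp]: "blocks 0 0 0 = 0"
  by (simp add: blocks_def fun_eq_iff)

lemma block_blocks:
  assumes "x \<in> zvecs 8" "y \<in> zvecs 8" "z \<in> zvecs 8"
  shows "block 0 (blocks x y z) = x" "block 1 (blocks x y z) = y" "block 2 (blocks x y z) = z"
  using assms by (auto simp: block_def blocks_def zvecs_def fun_eq_iff)

text \<open>The simplifier normalises \<open>1 :: nat\<close> to \<open>Suc 0\<close>.\<close>

declare block_blocks [unfolded One_nat_def, simp]

lemma blocks_block:
  assumes "v \<in> zvecs 24"
  shows "blocks (block 0 v) (block 1 v) (block 2 v) = v"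
proof
  fix i
  show "blocks (block 0 v) (block 1 v) (block 2 v) i = v i"
    using assms by (simp add: block_def blocks_def zvecs_def)
qed

lemma zvecs_24_cases:
  assumes "v \<in> zvecs 24"
  obtains x y z where "x \<in> zvecs 8" "y \<in> zvecs 8" "z \<in> zvecs 8" "v = blocks x y z"
  using blocks_block[OF assms] block_in_zvecs by metis

lemma blocks_eq_iff:
  assumes "x \<in> zvecs 8" "y \<in> zvecs 8" "z \<in> zvecs 8"
    and "x' \<in> zvecs 8" "y' \<in> zvecs 8" "z' \<in> zvecs 8"
  shows "blocks x y z = blocks x' y' z' \<longleftrightarrow> x = x' \<and> y = y' \<and> z = z'"
proof
  assume "blocks x y z = blocks x' y' z'"
  then have "block a (blocks x y z) = block a (blocks x' y' z')" for a
    by simp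
  from this[of 0] this[of 1] this[of 2] show "x = x' \<and> y = y' \<and> z = z'"
    using block_blocks[OF assms(1-3)] block_blocks[OF assms(4-6)] by simp
qed simp

lemma blocks_eq_0_iff:
  assumes "x \<in> zvecs 8" "y \<in> zvecs 8" "z \<in> zvecs 8"
  shows "blocks x y z = 0 \<longleftrightarrow> x = 0 \<and> y = 0 \<and> z = 0"
  using blocks_eq_iff[OF assms zvecs_zero zvecs_zero zvecs_zero] by simp

lemma sum_lessThan_24:
  fixes g :: "nat \<Rightarrow> 'a :: comm_monoid_add"
  shows "(\<Sum>i<24. g i) = (\<Sum>a<3. \<Sum>k<8. g (8 * a + k))"
  by (simp add: eval_nat_numeral ac_simps)

lemma sum_lessThan_3:
  fixes g :: "nat \<Rightarrow> 'a :: comm_monoid_add"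
  shows "(\<Sum>a<3. g a) = g 0 + g 1 + g 2"
  by (simp add: eval_nat_numeral ac_simps)

lemma e8_form_block:
  "e8_form (block a v) (block b w) = (\<Sum>k<8. \<Sum>l<8. v (8 * a + k) * gram_E8 k l * w (8 * b + l))"
  unfolding e8_form_def block_def by (intro sum.cong) auto

lemma bform_24_blockwise:
  "bform G 24 v w =
     (\<Sum>a<3. \<Sum>b<3. \<Sum>k<8. \<Sum>l<8. v (8 * a + k) * G (8 * a + k) (8 * b + l) * w (8 * b + l))"
  unfolding bform_def sum_lessThan_24 by (intro sum.cong refl sum.swap)

lemma bform_E8_3:
  "bform gram_E8_3 24 v w =
     e8_form (block 0 v) (block 0 w) + e8_form (block 1 v) (block 1 w) + e8_form (block 2 v) (block 2 w)"
proof -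
  have "(\<Sum>k<8. \<Sum>l<8. v (8 * a + k) * gram_E8_3 (8 * a + k) (8 * b + l) * w (8 * b + l)) =
        (if a = b then e8_form (block a v) (block b w) else 0)" for a b
    unfolding e8_form_block gram_E8_3_def by (auto intro!: sum.cong)
  then show ?thesis
    unfolding bform_24_blockwise by (simp add: sum_lessThan_3)
qed

lemma bform_QR:
  "bform gram_QR 24 v w =
     2 * e8_form (block 0 v) (block 0 w) - e8_form (block 0 v) (block 1 w)
     - e8_form (block 1 v) (block 0 w) + 2 * e8_form (block 1 v) (block 1 w)
     + 3 * e8_form (block 2 v) (block 2 w)"
proof -
  \<comment> \<open>Gram matrix of \<open>A\<^sub>2 \<perp> \<langle>3\<rangle>\<close>; blockwise, \<open>gram_QR\<close> is its Kronecker
    product with \<open>gram_E8\<close>.\<close>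
  define c :: "nat \<Rightarrow> nat \<Rightarrow> int" where
    "c a b = (if a < 2 \<and> b < 2 then gram_A2 a b else if a = 2 \<and> b = 2 then 3 else 0)" for a b
  have "gram_QR (8 * a + k) (8 * b + l) = c a b * gram_E8 k l"
    if "a < 3" "b < 3" "k < 8" "l < 8" for a b k l
    using that unfolding gram_QR_def gram_Q_def gram_R_def c_def
    by (auto simp: less_Suc_eq numeral_3_eq_3 numeral_2_eq_2)
  then have "(\<Sum>k<8. \<Sum>l<8. v (8 * a + k) * gram_QR (8 * a + k) (8 * b + l) * w (8 * b + l)) =
        c a b * e8_form (block a v) (block b w)" if "a < 3" "b < 3" for a b
    using that unfolding e8_form_block by (simp add: sum_distrib_left algebra_simps)
  then show ?thesis
    unfolding bform_24_blockwise by (simp add: sum_lessThan_3 c_def gram_A2_def)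
qed

lemma bform_E8_3_blocks:
  assumes "x \<in> zvecs 8" "y \<in> zvecs 8" "z \<in> zvecs 8" "x' \<in> zvecs 8" "y' \<in> zvecs 8" "z' \<in> zvecs 8"
  shows "bform gram_E8_3 24 (blocks x y z) (blocks x' y' z') = e8_form x x' + e8_form y y' + e8_form z z'"
  using assms by (simp add: bform_E8_3)

lemma bform_QR_blocks:
  assumes "x \<in> zvecs 8" "y \<in> zvecs 8" "z \<in> zvecs 8" "x' \<in> zvecs 8" "y' \<in> zvecs 8" "z' \<in> zvecs 8"
  shows "bform gram_QR 24 (blocks x y z) (blocks x' y' z') =
           2 * e8_form x x' - e8_form x y' - e8_form y x' + 2 * e8_form y y' + 3 * e8_form z z'"
  using assms by (simp add: bform_QR)

lemma block_eq_0_if_vanishing: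
  assumes "\<And>i. i div 8 = a \<Longrightarrow> v i = 0"
  shows "block a v = 0"
  using assms by (simp add: block_def fun_eq_iff)

lemma blocks_vanishing_outside:
  "i div 8 \<noteq> 0 \<Longrightarrow> blocks x 0 0 i = 0"
  "i div 8 \<noteq> 1 \<Longrightarrow> blocks 0 y 0 i = 0"
  "i div 8 \<noteq> 2 \<Longrightarrow> blocks 0 0 z i = 0"
  by (auto simp: blocks_def)

lemma E8_3_summand_eq:
  "E8_3_summand 0 = (\<lambda>x. blocks x 0 0) ` zvecs 8"
  "E8_3_summand 1 = (\<lambda>y. blocks 0 y 0) ` zvecs 8"
  "E8_3_summand 2 = (\<lambda>z. blocks 0 0 z) ` zvecs 8"
proof -
  have other_blocks: "block a v = 0" if "v \<in> E8_3_summand b" "a \<noteq> b" for v a b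
    using that by (intro block_eq_0_if_vanishing) (simp add: E8_3_summand_def)
  have summand_zvecs: "v \<in> zvecs 24" if "v \<in> E8_3_summand b" for v b
    using that by (simp add: E8_3_summand_def)
  have "v = blocks (block 0 v) 0 0" if "v \<in> E8_3_summand 0" for v
    using blocks_block[OF summand_zvecs[OF that]]
      other_blocks[OF that, of 1] other_blocks[OF that, of 2] by simp
  moreover have "v = blocks 0 (block 1 v) 0" if "v \<in> E8_3_summand 1" for v
    using blocks_block[OF summand_zvecs[OF that]]
      other_blocks[OF that, of 0] other_blocks[OF that, of 2] by simp
  moreover have "v = blocks 0 0 (block 2 v)" if "v \<in> E8_3_summand 2" for v
    using blocks_block[OF summand_zvecs[OF that]]
      other_blocks[OF that, of 0] other_blocks[OF that, of 1] by simp
  ultimately show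
    "E8_3_summand 0 = (\<lambda>x. blocks x 0 0) ` zvecs 8"
    "E8_3_summand 1 = (\<lambda>y. blocks 0 y 0) ` zvecs 8"
    "E8_3_summand 2 = (\<lambda>z. blocks 0 0 z) ` zvecs 8"
    using blocks_vanishing_outside by (auto simp: E8_3_summand_def image_iff)
qed

lemma R_part_eq: "R_part = (\<lambda>z. blocks 0 0 z) ` zvecs 8"
proof -
  have "i div 8 = 2 \<longleftrightarrow> 16 \<le> i \<and> i < 24" for i :: nat
    by presburger
  then have "R_part = E8_3_summand 2"
    unfolding R_part_def E8_3_summand_def zvecs_def by auto
  then show ?thesis
    by (simp add: E8_3_summand_eq)
qed

lemma inj_on_zvecs_if_additive:
  fixes f :: "(nat \<Rightarrow> int) \<Rightarrow> 'a :: ab_group_add"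
  assumes add: "\<And>v w. v \<in> zvecs n \<Longrightarrow> w \<in> zvecs n \<Longrightarrow> f (v + w) = f v + f w"
    and kernel: "\<And>v. v \<in> zvecs n \<Longrightarrow> f v = 0 \<Longrightarrow> v = 0"
  shows "inj_on f (zvecs n)"
proof (rule inj_onI)
  fix v w assume v: "v \<in> zvecs n" and w: "w \<in> zvecs n" and eq: "f v = f w"
  have "f v = f (v - w) + f w"
    using add[of "v - w" w] v w by simp
  then have "f (v - w) = 0"
    using eq by simp
  then show "v = w"
    using kernel[of "v - w"] v w by simp
qed

lemma isometric_embeddingI:
  assumes "\<And>v. v \<in> zvecs 24 \<Longrightarrow> f v \<in> zvecs 24"
    and "\<And>v w. v \<in> zvecs 24 \<Longrightarrow> w \<in> zvecs 24 \<Longrightarrow> f (v + w) = f v + f w"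
    and "\<And>v w. v \<in> zvecs 24 \<Longrightarrow> w \<in> zvecs 24 \<Longrightarrow>
           bform gram_E8_3 24 (f v) (f w) = bform gram_QR 24 v w"
    and "\<And>v. v \<in> zvecs 24 \<Longrightarrow> f v = 0 \<Longrightarrow> v = 0"
  shows "isometric_embedding f"
  using assms inj_on_zvecs_if_additive[of 24 f]
  unfolding isometric_embedding_def QR_lattice_def E8_3_def by blast

section \<open>An embedding with \<open>R\<close> as fixed lattice of the cyclic shift\<close>

definition diagonal_embedding :: "(nat \<Rightarrow> int) \<Rightarrow> nat \<Rightarrow> int" where
  "diagonal_embedding v =
     blocks (block 0 v + block 2 v) (block 1 v - block 0 v + block 2 v) (block 2 v - block 1 v)"

lemma diagonal_embedding_blocks [simp]:
  assumes "x \<in> zvecs 8" "y \<in> zvecs 8" "z \<in> zvecs 8"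
  shows "diagonal_embedding (blocks x y z) = blocks (x + z) (y - x + z) (z - y)"
  using assms by (simp add: diagonal_embedding_def)

lemma isometric_embedding_diagonal: "isometric_embedding diagonal_embedding"
proof (rule isometric_embeddingI)
  fix v w assume v: "v \<in> zvecs 24" and w: "w \<in> zvecs 24"
  show "diagonal_embedding v \<in> zvecs 24"
    by (simp add: diagonal_embedding_def)
  show "diagonal_embedding (v + w) = diagonal_embedding v + diagonal_embedding w"
    by (simp add: diagonal_embedding_def blocks_add[symmetric] algebra_simps)
  obtain x y z where "x \<in> zvecs 8" "y \<in> zvecs 8" "z \<in> zvecs 8" "v = blocks x y z"
    using v by (rule zvecs_24_cases)
  moreover obtain x' y' z' where "x' \<in> zvecs 8" "y' \<in> zvecs 8" "z' \<in> zvecs 8" "w = blocks x' y' z'"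
    using w by (rule zvecs_24_cases)
  ultimately show "bform gram_E8_3 24 (diagonal_embedding v) (diagonal_embedding w) = bform gram_QR 24 v w"
    by (simp add: bform_E8_3_blocks bform_QR_blocks e8_form_bilinear algebra_simps)
next
  fix v assume v: "v \<in> zvecs 24" and "diagonal_embedding v = 0"
  obtain x y z where xyz: "x \<in> zvecs 8" "y \<in> zvecs 8" "z \<in> zvecs 8" and v_eq: "v = blocks x y z"
    using v by (rule zvecs_24_cases)
  have "x + z = 0 \<and> y - x + z = 0 \<and> z - y = 0"
    using \<open>diagonal_embedding v = 0\<close>
    by (simp only: v_eq diagonal_embedding_blocks blocks_eq_0_iff xyz zvecs_add zvecs_diff)
  then have "x k = 0 \<and> y k = 0 \<and> z k = 0" for k
    by (auto dest!: fun_cong[of _ _ k])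
  then have "x = 0" "y = 0" "z = 0"
    by (simp_all add: fun_eq_iff)
  then show "v = 0"
    by (simp add: v_eq)
qed

lemma diagonal_embedding_R_part: "diagonal_embedding ` R_part = (\<lambda>x. blocks x x x) ` zvecs 8"
  by (simp add: R_part_eq image_image)

definition cyclic_shift :: "(nat \<Rightarrow> int) \<Rightarrow> nat \<Rightarrow> int" where
  "cyclic_shift v = blocks (block 2 v) (block 0 v) (block 1 v)"

lemma cyclic_shift_blocks [simp]:
  assumes "x \<in> zvecs 8" "y \<in> zvecs 8" "z \<in> zvecs 8"
  shows "cyclic_shift (blocks x y z) = blocks z x y"
  using assms by (simp add: cyclic_shift_def)

lemma cyclic_shift_cube:
  assumes "v \<in> zvecs 24"
  shows "cyclic_shift (cyclic_shift (cyclic_shift v)) = v"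
  using assms by (elim zvecs_24_cases) simp

lemma E8_3_automorphism_cyclic_shift: "E8_3_automorphism cyclic_shift"
  unfolding E8_3_automorphism_def E8_3_def
proof (intro conjI ballI)
  show "bij_betw cyclic_shift (zvecs 24) (zvecs 24)"
    by (rule bij_betw_byWitness[where f' = "cyclic_shift \<circ> cyclic_shift"])
       (auto simp: cyclic_shift_cube, auto simp: cyclic_shift_def)
  fix v w assume v: "v \<in> zvecs 24" and w: "w \<in> zvecs 24"
  show "cyclic_shift (v + w) = cyclic_shift v + cyclic_shift w"
    by (simp add: cyclic_shift_def blocks_add)
  show "bform gram_E8_3 24 (cyclic_shift v) (cyclic_shift w) = bform gram_E8_3 24 v w"
    using v w by (elim zvecs_24_cases) (simp add: bform_E8_3_blocks)
qed

lemma has_order_3_cyclic_shift: "has_order_3 cyclic_shift"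
  unfolding has_order_3_def E8_3_def
proof (intro conjI ballI bexI)
  define e :: "nat \<Rightarrow> int" where "e = (\<lambda>k. if k = 0 then 1 else 0)"
  have e: "e \<in> zvecs 8" "e \<noteq> 0"
    by (auto simp: e_def zvecs_def fun_eq_iff)
  then show "cyclic_shift (blocks e 0 0) \<noteq> blocks e 0 0"
    by (simp add: blocks_eq_iff)
qed (simp_all add: cyclic_shift_cube)

lemma permutes_summands_cyclically_cyclic_shift: "permutes_summands_cyclically cyclic_shift"
  unfolding permutes_summands_cyclically_def
proof (intro bexI[of _ 1] allI impI)
  fix b :: nat assume "b < 3"
  have shifts:
    "cyclic_shift ` E8_3_summand 0 = E8_3_summand 1"
    "cyclic_shift ` E8_3_summand 1 = E8_3_summand 2"
    "cyclic_shift ` E8_3_summand 2 = E8_3_summand 0"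
    by (simp_all add: E8_3_summand_eq[unfolded One_nat_def] image_image)
  from \<open>b < 3\<close> consider "b = 0" | "b = 1" | "b = 2"
    by linarith
  then show "cyclic_shift ` E8_3_summand b = E8_3_summand ((b + 1) mod 3)"
    by cases (simp_all add: shifts del: One_nat_def)
qed simp

lemma fixed_sublattice_cyclic_shift: "fixed_sublattice cyclic_shift = (\<lambda>x. blocks x x x) ` zvecs 8"
proof -
  have "blocks z x y = blocks x y z \<longleftrightarrow> x = y \<and> y = z"
    if "x \<in> zvecs 8" "y \<in> zvecs 8" "z \<in> zvecs 8" for x y z
    using that by (auto simp: blocks_eq_iff)
  then show ?thesis
    unfolding fixed_sublattice_def E8_3_def by (auto elim!: zvecs_24_cases)
qed

section \<open>An embedding with \<open>R\<close> rationally spanning a summand\<close>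

definition summand_embedding :: "(nat \<Rightarrow> int) \<Rightarrow> nat \<Rightarrow> int" where
  "summand_embedding v =
     blocks (e8_sqrt_neg3 (block 2 v)) (block 0 v + e8_omega (block 1 v))
            (block 0 v - block 1 v - e8_omega (block 1 v))"

lemma summand_embedding_blocks [simp]:
  assumes "x \<in> zvecs 8" "y \<in> zvecs 8" "z \<in> zvecs 8"
  shows "summand_embedding (blocks x y z) =
           blocks (e8_sqrt_neg3 z) (x + e8_omega y) (x - y - e8_omega y)"
  using assms by (simp add: summand_embedding_def)

lemma isometric_embedding_summand: "isometric_embedding summand_embedding"
proof (rule isometric_embeddingI)
  fix v w assume v: "v \<in> zvecs 24" and w: "w \<in> zvecs 24"
  show "summand_embedding v \<in> zvecs 24"
    by (simp add: summand_embedding_def)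
  show "summand_embedding (v + w) = summand_embedding v + summand_embedding w"
    by (simp add: summand_embedding_def blocks_add[symmetric] algebra_simps)
  obtain x y z where xyz: "x \<in> zvecs 8" "y \<in> zvecs 8" "z \<in> zvecs 8" "v = blocks x y z"
    using v by (rule zvecs_24_cases)
  obtain x' y' z' where xyz': "x' \<in> zvecs 8" "y' \<in> zvecs 8" "z' \<in> zvecs 8" "w = blocks x' y' z'"
    using w by (rule zvecs_24_cases)
  show "bform gram_E8_3 24 (summand_embedding v) (summand_embedding w) = bform gram_QR 24 v w"
    using xyz xyz' e8_form_omega_sum[of y y']
    by (simp add: bform_E8_3_blocks bform_QR_blocks e8_form_sqrt_neg3 e8_form_bilinear)
next
  fix v assume v: "v \<in> zvecs 24" and "summand_embedding v = 0"
  obtain x y z where xyz: "x \<in> zvecs 8" "y \<in> zvecs 8" "z \<in> zvecs 8" and v_eq: "v = blocks x y z"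
    using v by (rule zvecs_24_cases)
  have "e8_sqrt_neg3 z = 0 \<and> x + e8_omega y = 0 \<and> x - y - e8_omega y = 0"
    using \<open>summand_embedding v = 0\<close>
    by (simp only: v_eq summand_embedding_blocks blocks_eq_0_iff xyz zvecs_add zvecs_diff
        e8_omega_in_zvecs e8_sqrt_neg3_in_zvecs)
  moreover have "e8_sqrt_neg3 y = (x + e8_omega y) - (x - y - e8_omega y)"
    unfolding e8_sqrt_neg3_def mult_2 by (simp add: algebra_simps)
  ultimately have "z = 0" "y = 0" "x = 0"
    using xyz by (simp_all add: e8_sqrt_neg3_eq_0_iff)
  then show "v = 0"
    by (simp add: v_eq)
qed

lemma summand_embedding_R_part:
  "summand_embedding ` R_part = (\<lambda>z. blocks (e8_sqrt_neg3 z) 0 0) ` zvecs 8"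
  by (simp add: R_part_eq image_image)

lemma rat_span_vanishing:
  assumes "\<And>v. v \<in> L \<Longrightarrow> v i = 0" and "x \<in> rat_span L"
  shows "x i = 0"
  using assms unfolding rat_span_def by (auto intro!: sum.neutral)

lemma rat_span_scaled:
  assumes "v \<in> L"
  shows "(\<lambda>i. c * of_int (v i)) \<in> rat_span L"
  unfolding rat_span_def using assms by (intro CollectI exI[of _ "{v}"] exI[of _ "\<lambda>_. c"]) auto

lemma rat_span_inter_E8_3_summand_embedding:
  "rat_span_inter_E8_3 (summand_embedding ` R_part) = E8_3_summand 0"
proof (intro equalityI subsetI)
  fix x assume x: "x \<in> rat_span_inter_E8_3 (summand_embedding ` R_part)"
  have "x i = 0" if "i div 8 \<noteq> 0" for i
  proof -
    have "(\<lambda>i. rat_of_int (x i)) i = 0"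
      using x blocks_vanishing_outside(1)[OF that]
      by (intro rat_span_vanishing[where L = "summand_embedding ` R_part"])
         (auto simp: rat_span_inter_E8_3_def summand_embedding_R_part)
    then show ?thesis
      by simp
  qed
  with x show "x \<in> E8_3_summand 0"
    by (simp add: E8_3_summand_def rat_span_inter_E8_3_def E8_3_def)
next
  fix x assume "x \<in> E8_3_summand 0"
  then obtain x0 where x0: "x0 \<in> zvecs 8" and x_eq: "x = blocks x0 0 0"
    by (auto simp: E8_3_summand_eq)
  let ?v = "blocks (e8_sqrt_neg3 (e8_sqrt_neg3 x0)) 0 0"
  have "?v \<in> summand_embedding ` R_part"
    using x0 by (auto simp: summand_embedding_R_part)
  then have "(\<lambda>i. (- 1 / 3) * rat_of_int (?v i)) \<in> rat_span (summand_embedding ` R_part)"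
    by (rule rat_span_scaled)
  moreover have "(\<lambda>i. (- 1 / 3) * rat_of_int (?v i)) = (\<lambda>i. rat_of_int (x i))"
    using x0 by (simp add: e8_sqrt_neg3_square x_eq blocks_def fun_eq_iff)
  ultimately show "x \<in> rat_span_inter_E8_3 (summand_embedding ` R_part)"
    by (simp add: rat_span_inter_E8_3_def E8_3_def x_eq)
qed

lemma orthogonal_direct_summand_E8_3_summand_0: "orthogonal_direct_summand (E8_3_summand 0)"
proof -
  let ?N = "(\<lambda>x. blocks x 0 0) ` zvecs 8"
  let ?N' = "(\<lambda>(y, z). blocks 0 y z) ` (zvecs 8 \<times> zvecs 8)"
  have "0 \<in> ?N"
    by (rule image_eqI[where x = 0]) simp_all
  moreover have "0 \<in> ?N'"
    by (rule image_eqI[where x = "(0, 0)"]) simp_all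
  ultimately have subgroups: "is_subgroup_of_E8_3 ?N" "is_subgroup_of_E8_3 ?N'"
    unfolding is_subgroup_of_E8_3_def E8_3_def
    by (auto simp: blocks_add[symmetric] blocks_uminus)
  have orthogonal: "bform gram_E8_3 24 a b = 0" if "a \<in> ?N" "b \<in> ?N'" for a b
    using that by (auto simp: bform_E8_3_blocks)
  have decomposition: "\<exists>!p. fst p \<in> ?N \<and> snd p \<in> ?N' \<and> v = fst p + snd p"
    if "v \<in> zvecs 24" for v
  proof -
    obtain x y z where xyz: "x \<in> zvecs 8" "y \<in> zvecs 8" "z \<in> zvecs 8" "v = blocks x y z"
      using \<open>v \<in> zvecs 24\<close> by (rule zvecs_24_cases)
    show ?thesis
    proof (rule ex1I[of _ "(blocks x 0 0, blocks 0 y z)"])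
      show "fst (blocks x 0 0, blocks 0 y z) \<in> ?N \<and> snd (blocks x 0 0, blocks 0 y z) \<in> ?N' \<and>
            v = fst (blocks x 0 0, blocks 0 y z) + snd (blocks x 0 0, blocks 0 y z)"
        using xyz by (auto simp: blocks_add[symmetric])
    next
      fix p assume p: "fst p \<in> ?N \<and> snd p \<in> ?N' \<and> v = fst p + snd p"
      then have "fst p \<in> ?N" "snd p \<in> ?N'"
        by simp_all
      then obtain x' y' z' where x': "x' \<in> zvecs 8" "fst p = blocks x' 0 0"
        and y'z': "y' \<in> zvecs 8" "z' \<in> zvecs 8" "snd p = blocks 0 y' z'"
        by auto
      have "blocks x y z = blocks x' y' z'"
        using p x' y'z' xyz by (simp add: blocks_add[symmetric])
      then show "p = (blocks x 0 0, blocks 0 y z)"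
        using xyz x' y'z' by (simp add: blocks_eq_iff prod_eq_iff)
    qed
  qed
  have "\<forall>a\<in>?N. \<forall>b\<in>?N'. bform gram_E8_3 24 a b = 0"
    using orthogonal by blast
  moreover have "\<forall>v\<in>E8_3. \<exists>!p. fst p \<in> ?N \<and> snd p \<in> ?N' \<and> v = fst p + snd p"
    using decomposition by (simp add: E8_3_def)
  ultimately show ?thesis
    unfolding orthogonal_direct_summand_def E8_3_summand_eq(1)
    using subgroups by blast
qed

theorem lemma6p1:
  shows "(\<exists>f s. isometric_embedding f \<and> E8_3_automorphism s \<and> has_order_3 s \<and>
                permutes_summands_cyclically s \<and> f ` R_part = fixed_sublattice s)
       \<and> (\<exists>f. isometric_embedding f \<and>
                orthogonal_direct_summand (rat_span_inter_E8_3 (f ` R_part)))"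
proof (intro conjI exI)
  show "isometric_embedding diagonal_embedding" "E8_3_automorphism cyclic_shift"
    "has_order_3 cyclic_shift" "permutes_summands_cyclically cyclic_shift"
    by (fact isometric_embedding_diagonal E8_3_automorphism_cyclic_shift
        has_order_3_cyclic_shift permutes_summands_cyclically_cyclic_shift)+
  show "diagonal_embedding ` R_part = fixed_sublattice cyclic_shift"
    by (simp add: diagonal_embedding_R_part fixed_sublattice_cyclic_shift)
  show "isometric_embedding summand_embedding"
    by (fact isometric_embedding_summand)
  show "orthogonal_direct_summand (rat_span_inter_E8_3 (summand_embedding ` R_part))"
    by (simp add: rat_span_inter_E8_3_summand_embedding orthogonal_direct_summand_E8_3_summand_0)
qed

end
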